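(* Let $H\ge1$, $c_a\ge0$, $c_R\ge0$, and for $h=1,\dots,H$ let $p_{h,0},p_{h,1}\in[0,1]$ with $p_{h,0}\ge p_{h,1}$. Define $V_{H+1}=0$ and, for $h=H,\dots,1$, $V_h=\min\{c_a+p_{h,1}c_R+(1-p_{h,1})V_{h+1},\ p_{h,0}c_R+(1-p_{h,0})V_{h+1}\}$. Then for all $1\le h\le H$, $$\Big(1-\prod_{i=h}^H(1-p_{i,1})\Big)c_R\le V_h\le\Big(1-\prod_{i=h}^H(1-p_{i,0})\Big)c_R.$$ *)

theory Defs
  imports Complex_Main
begin

function Vval :: "nat \<Rightarrow> real \<Rightarrow> real \<Rightarrow> (nat \<Rightarrow> real) \<Rightarrow> (nat \<Rightarrow> real) \<Rightarrow> nat \<Rightarrow> real" where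
  "Vval H ca cR p0 p1 h =
     (if H < h then 0
      else min (ca + p1 h * cR + (1 - p1 h) * Vval H ca cR p0 p1 (Suc h))
               (p0 h * cR + (1 - p0 h) * Vval H ca cR p0 p1 (Suc h)))"
  by pat_completeness auto
termination by (relation "measure (\<lambda>(H, ca, cR, p0, p1, h). Suc H - h)") auto

end

theory Submission
  imports Defs
begin

text \<open>The quantity (1 - \<Prod>i=h..H. 1 - p i) * c_R satisfies the one-stage
  recursion W_h = p h * c_R + (1 - p h) * W_{h+1} with W_{H+1} = 0. Taking p = p0 this is the
  second branch of the minimum, which gives the upper bound. For the lower bound, both branches
  dominate the recursion with p = p1: the first one because c_a \<ge> 0, the second one because
  V_{h+1} \<le> c_R and p0 h \<ge> p1 h, so passing from p1 to p0 shifts weight onto the larger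
  value c_R.\<close>

declare Vval.simps [simp del]

lemma Vval_beyond_horizon: "H < h \<Longrightarrow> Vval H ca cR p0 p1 h = 0"
  by (subst Vval.simps) simp

lemma Vval_step:
  "h \<le> H \<Longrightarrow> Vval H ca cR p0 p1 h =
     min (ca + p1 h * cR + (1 - p1 h) * Vval H ca cR p0 p1 (Suc h))
         (p0 h * cR + (1 - p0 h) * Vval H ca cR p0 p1 (Suc h))"
  by (subst Vval.simps) simp

lemma bellman_step_lower:
  fixes ca cR p0 p1 q V :: real
  assumes "0 \<le> ca" and "0 \<le> p1" and "p1 \<le> p0" and "p1 \<le> 1"
    and lower: "(1 - q) * cR \<le> V" and "V \<le> cR"
  shows "(1 - (1 - p1) * q) * cR \<le> min (ca + p1 * cR + (1 - p1) * V) (p0 * cR + (1 - p0) * V)"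
proof -
  have "(1 - p1) * ((1 - q) * cR) \<le> (1 - p1) * V"
    using lower \<open>p1 \<le> 1\<close> by (simp add: mult_left_mono)
  then have p1_branch: "(1 - (1 - p1) * q) * cR \<le> p1 * cR + (1 - p1) * V"
    by (simp add: algebra_simps)
  have "p1 * (cR - V) \<le> p0 * (cR - V)"
    using \<open>p1 \<le> p0\<close> \<open>V \<le> cR\<close> by (simp add: mult_right_mono)
  then have "p1 * cR + (1 - p1) * V \<le> p0 * cR + (1 - p0) * V"
    by (simp add: algebra_simps)
  with p1_branch \<open>0 \<le> ca\<close> show ?thesis
    by simp
qed

lemma bellman_step_upper:
  fixes ca cR p0 p1 q V :: real
  assumes "p0 \<le> 1" and upper: "V \<le> (1 - q) * cR"
  shows "min (ca + p1 * cR + (1 - p1) * V) (p0 * cR + (1 - p0) * V) \<le> (1 - (1 - p0) * q) * cR"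
proof -
  have "(1 - p0) * V \<le> (1 - p0) * ((1 - q) * cR)"
    using upper \<open>p0 \<le> 1\<close> by (simp add: mult_left_mono)
  then have "p0 * cR + (1 - p0) * V \<le> (1 - (1 - p0) * q) * cR"
    by (simp add: algebra_simps)
  then show ?thesis
    by (simp add: min_le_iff_disj)
qed

lemma Vval_bounds:
  fixes H h :: nat and ca cR :: real and p0 p1 :: "nat \<Rightarrow> real"
  assumes "h \<le> Suc H" and "0 \<le> ca" and "0 \<le> cR"
    and probs: "\<And>i. h \<le> i \<Longrightarrow> i \<le> H \<Longrightarrow> 0 \<le> p1 i \<and> p1 i \<le> p0 i \<and> p0 i \<le> 1"
  shows "(1 - (\<Prod>i=h..H. 1 - p1 i)) * cR \<le> Vval H ca cR p0 p1 h \<and>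
         Vval H ca cR p0 p1 h \<le> (1 - (\<Prod>i=h..H. 1 - p0 i)) * cR"
  using \<open>h \<le> Suc H\<close>
proof (induction h rule: inc_induct)
  case base
  show ?case
    by (simp add: Vval_beyond_horizon)
next
  case (step n)
  define V where "V = Vval H ca cR p0 p1 (Suc n)"
  have n_le: "n \<le> H"
    using step.hyps by simp
  have p_n: "0 \<le> p1 n" "p1 n \<le> p0 n" "p0 n \<le> 1"
    using probs step.hyps by auto
  have lower: "(1 - (\<Prod>i=Suc n..H. 1 - p1 i)) * cR \<le> V"
    and upper: "V \<le> (1 - (\<Prod>i=Suc n..H. 1 - p0 i)) * cR"
    using step.IH unfolding V_def by auto
  have "0 \<le> (\<Prod>i=Suc n..H. 1 - p0 i)"
    using probs step.hyps by (intro prod_nonneg) auto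
  with \<open>0 \<le> cR\<close> have "0 \<le> (\<Prod>i=Suc n..H. 1 - p0 i) * cR"
    by simp
  with upper have "V \<le> cR"
    by (simp add: left_diff_distrib)
  have "(1 - (1 - p1 n) * (\<Prod>i=Suc n..H. 1 - p1 i)) * cR
          \<le> min (ca + p1 n * cR + (1 - p1 n) * V) (p0 n * cR + (1 - p0 n) * V)"
    using \<open>0 \<le> ca\<close> p_n lower \<open>V \<le> cR\<close> by (intro bellman_step_lower) auto
  moreover have "min (ca + p1 n * cR + (1 - p1 n) * V) (p0 n * cR + (1 - p0 n) * V)
          \<le> (1 - (1 - p0 n) * (\<Prod>i=Suc n..H. 1 - p0 i)) * cR"
    using bellman_step_upper[OF p_n(3) upper] .
  ultimately show ?case
    unfolding Vval_step[OF n_le] V_def [symmetric] prod.atLeast_Suc_atMost[OF n_le] by simp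
qed

theorem mainTheorem4:
  fixes H :: nat and ca cR :: real and p0 p1 :: "nat \<Rightarrow> real"
  assumes "H \<ge> 1" and "ca \<ge> 0" and "cR \<ge> 0"
    and "\<And>h. 1 \<le> h \<Longrightarrow> h \<le> H \<Longrightarrow> 0 \<le> p0 h \<and> p0 h \<le> 1"
    and "\<And>h. 1 \<le> h \<Longrightarrow> h \<le> H \<Longrightarrow> 0 \<le> p1 h \<and> p1 h \<le> 1"
    and "\<And>h. 1 \<le> h \<Longrightarrow> h \<le> H \<Longrightarrow> p0 h \<ge> p1 h"
  shows "\<forall>h. 1 \<le> h \<and> h \<le> H \<longrightarrow>
           (1 - (\<Prod>i=h..H. 1 - p1 i)) * cR \<le> Vval H ca cR p0 p1 h \<and>
           Vval H ca cR p0 p1 h \<le> (1 - (\<Prod>i=h..H. 1 - p0 i)) * cR"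
proof (intro allI impI)
  fix h assume h: "1 \<le> h \<and> h \<le> H"
  show "(1 - (\<Prod>i=h..H. 1 - p1 i)) * cR \<le> Vval H ca cR p0 p1 h \<and>
        Vval H ca cR p0 p1 h \<le> (1 - (\<Prod>i=h..H. 1 - p0 i)) * cR"
    using h assms(2-6) by (intro Vval_bounds) auto
qed

end
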